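(* For integers $a_1\ge1$, $a_2\ge0$ and $s\ge1$, \[ G(a_1,a_2,s)=G(a_1-1,a_2,s)+G(a_1-1,a_2,s-1)+G(a_1,a_2-1,s)+G(a_1,a_2-1,s-1). \]
   Context: For integers $a_1,a_2,s$ with $a=a_1+a_2$, $G(a_1,a_2,s)=\sum_m N_m$, the sum over integers $m$ such that $a_1-m,\ a_2-(s-m),\ m,\ s-m$ are all nonnegative (an empty sum is $0$; in particular $G=0$ whenever $a_2<0$ or $s>a$), where $N_m$ is the number of permutations $\pi$ of $[a]$ that are decreasing within each of four consecutive blocks of positions of lengths $a_1-m,\ a_2-(s-m),\ m,\ s-m$ (in this order; arbitrary between blocks), and have no fixed point ($\pi_i=i$) in the first two blocks. *)

theory Defs
  imports "HOL-Combinatorics.Permutations"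
begin

definition dec_on :: "(nat \<Rightarrow> nat) \<Rightarrow> nat \<Rightarrow> nat \<Rightarrow> bool" where
  "dec_on p lo hi \<longleftrightarrow> (\<forall>i j. lo \<le> i \<and> i < j \<and> j \<le> hi \<longrightarrow> p j < p i)"

definition Nblk :: "nat \<Rightarrow> nat \<Rightarrow> nat \<Rightarrow> nat \<Rightarrow> nat" where
  "Nblk L1 L2 L3 L4 = card {p. p permutes {1..L1+L2+L3+L4}
      \<and> dec_on p 1 L1
      \<and> dec_on p (L1+1) (L1+L2)
      \<and> dec_on p (L1+L2+1) (L1+L2+L3)
      \<and> dec_on p (L1+L2+L3+1) (L1+L2+L3+L4)
      \<and> (\<forall>i\<in>{1..L1+L2}. p i \<noteq> i)}"

definition G :: "int \<Rightarrow> int \<Rightarrow> int \<Rightarrow> nat" where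
  "G a1 a2 s = (\<Sum>m \<in> {m::int. 0 \<le> a1 - m \<and> 0 \<le> a2 - (s - m) \<and> 0 \<le> m \<and> 0 \<le> s - m}.
      Nblk (nat (a1 - m)) (nat (a2 - (s - m))) (nat m) (nat (s - m)))"

end

theory Submission
  imports Defs "HOL-Combinatorics.Multiset_Permutations"
begin

text \<open>
  The inverse \<open>s\<close> of a permutation counted by \<open>Nblk L1 L2 L3 L4\<close> decreases along every set of
  positions whose values lie in one block. Such an \<open>s\<close> is determined by the word whose \<open>v\<close>-th
  letter is the block of \<open>s v\<close>, a rearrangement of \<open>L1\<close> letters 0, \<open>L2\<close> letters 1, \<open>L3\<close> letters 2
  and \<open>L4\<close> letters 3: the value \<open>s v\<close> is read off from the number of later occurrences of the
  same letter. A fixed point in block \<open>k \<in> {0, 1}\<close> then means that the walk which advances by 2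
  on the letter \<open>k\<close> and by 1 on all others jumps over the last position of block \<open>k\<close>, so \<open>Nblk\<close>
  counts the words in which both walks hit their targets.

  Reversing words reflects walks and peeling off the first letter shifts them; together these show
  that the number of words whose walk hits a value \<open>A\<close> does not depend on \<open>A\<close> between the number
  of letters \<open>k\<close> and the length. Hence the target conditions survive deleting the last letter,
  which gives the Pascal recursion \<open>N(B) = (\<Sum>x\<in>B. N(B - {x}))\<close> whenever \<open>B\<close> contains a letter 2
  or 3. Summing the resulting four-term recursion for \<open>Nblk\<close> over the parameter \<open>m\<close> of \<open>G\<close> gives
  the theorem.
\<close>

section \<open>Counting words with a prescribed multiset of letters\<close>

lemma finite_mset_eq [simp]: "finite {u. mset u = B \<and> P u}"
  by (rule finite_subset[OF _ finite_permutations_of_multiset[of B]])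
    (auto simp: permutations_of_multiset_def)

lemma finite_submultisets: "finite {C. C \<subseteq># B}"
proof (rule finite_subset)
  show "{C. C \<subseteq># B} \<subseteq> mset ` {xs. set xs \<subseteq> set_mset B \<and> length xs \<le> size B}"
  proof
    fix C assume "C \<in> {C. C \<subseteq># B}"
    moreover obtain xs where "mset xs = C" using ex_mset by blast
    ultimately show "C \<in> mset ` {xs. set xs \<subseteq> set_mset B \<and> length xs \<le> size B}"
      by (force dest: set_mset_mono size_mset_mono)
  qed
  show "finite (mset ` {xs. set xs \<subseteq> set_mset B \<and> length xs \<le> size B})"
    by (intro finite_imageI finite_lists_length_le) simp
qed

lemma card_mset_eq_Cons:
  assumes "B \<noteq> {#}"
  shows "card {u. mset u = B \<and> P u} = (\<Sum>x\<in>set_mset B. card {u. mset u = B - {#x#} \<and> P (x # u)})"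
proof -
  have "{u. mset u = B \<and> P u} = (\<Union>x\<in>set_mset B. (#) x ` {u. mset u = B - {#x#} \<and> P (x # u)})"
    using permutations_of_multiset_nonempty[OF assms]
    by (auto simp: permutations_of_multiset_def set_eq_iff)
  also have "card \<dots> = (\<Sum>x\<in>set_mset B. card ((#) x ` {u. mset u = B - {#x#} \<and> P (x # u)}))"
    by (rule card_UN_disjoint) auto
  also have "\<dots> = (\<Sum>x\<in>set_mset B. card {u. mset u = B - {#x#} \<and> P (x # u)})"
    by (intro sum.cong refl card_image) auto
  finally show ?thesis .
qed

lemma card_mset_eq_rev: "card {u. mset u = B \<and> P u} = card {u. mset u = B \<and> P (rev u)}"
  by (rule bij_betw_same_card[of rev], rule bij_betw_byWitness[where f' = rev]) auto

lemma card_mset_eq_snoc: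
  assumes "B \<noteq> {#}"
  shows "card {u. mset u = B \<and> P u} = (\<Sum>x\<in>set_mset B. card {u. mset u = B - {#x#} \<and> P (u @ [x])})"
proof -
  have "card {u. mset u = B \<and> P u} = (\<Sum>x\<in>set_mset B. card {u. mset u = B - {#x#} \<and> P (rev (x # u))})"
    by (subst card_mset_eq_rev) (rule card_mset_eq_Cons[OF assms])
  also have "\<dots> = (\<Sum>x\<in>set_mset B. card {u. mset u = B - {#x#} \<and> P (u @ [x])})"
    by (intro sum.cong refl, subst card_mset_eq_rev) simp
  finally show ?thesis .
qed

lemma card_mset_eq_split:
  assumes "l \<le> size B"
  shows "card {w. mset w = B \<and> P (take l w) \<and> Q (drop l w)} =
    (\<Sum>C\<in>{C. C \<subseteq># B \<and> size C = l}. card {p. mset p = C \<and> P p} * card {q. mset q = B - C \<and> Q q})"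
proof -
  let ?S = "\<lambda>C. {p. mset p = C \<and> P p} \<times> {q. mset q = B - C \<and> Q q}"
  have "bij_betw (\<lambda>w. (take l w, drop l w)) {w. mset w = B \<and> P (take l w) \<and> Q (drop l w)}
    (\<Union>C\<in>{C. C \<subseteq># B \<and> size C = l}. ?S C)"
  proof (rule bij_betw_byWitness[where f' = "\<lambda>(p, q). p @ q"])
    show "(\<lambda>w. (take l w, drop l w)) ` {w. mset w = B \<and> P (take l w) \<and> Q (drop l w)}
      \<subseteq> (\<Union>C\<in>{C. C \<subseteq># B \<and> size C = l}. ?S C)"
    proof (rule image_subsetI)
      fix w assume "w \<in> {w. mset w = B \<and> P (take l w) \<and> Q (drop l w)}"
      then have w: "mset w = B" "P (take l w)" "Q (drop l w)" by auto
      have "B = mset (take l w) + mset (drop l w)"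
        by (metis w(1) append_take_drop_id mset_append)
      then show "(take l w, drop l w) \<in> (\<Union>C\<in>{C. C \<subseteq># B \<and> size C = l}. ?S C)"
        using w assms by (intro UN_I[of "mset (take l w)"]) auto
    qed
  qed (auto simp: subset_mset.add_diff_inverse)
  then have "card {w. mset w = B \<and> P (take l w) \<and> Q (drop l w)} =
      card (\<Union>C\<in>{C. C \<subseteq># B \<and> size C = l}. ?S C)"
    by (rule bij_betw_same_card)
  also have "\<dots> = (\<Sum>C\<in>{C. C \<subseteq># B \<and> size C = l}. card (?S C))"
    using finite_submultisets[of B] by (intro card_UN_disjoint) auto
  finally show ?thesis by (simp add: card_cartesian_product)
qed

section \<open>Walks that visit a prescribed value\<close>

text \<open>The walk \<open>t \<mapsto> t + #k(take t u)\<close> moves up by 2 on the letter \<open>k\<close> and by 1 on every other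
  letter; \<open>hits k A u\<close> says that it visits \<open>A\<close>.\<close>

definition hits :: "'a \<Rightarrow> nat \<Rightarrow> 'a list \<Rightarrow> bool" where
  "hits k A u \<longleftrightarrow> (\<exists>t\<le>length u. t + count_list (take t u) k = A)"

lemma count_list_take_drop: "count_list (take t u) k + count_list (drop t u) k = count_list u k"
  by (metis append_take_drop_id count_list_append)

lemma count_list_drop_le: "count_list (drop n u) k \<le> count_list u k"
  using count_list_take_drop[of n u k] by linarith

lemma count_list_drop_nth_less:
  assumes "a < b" "b \<le> length u"
  shows "count_list (drop b u) (u ! (b - 1)) < count_list (drop a u) (u ! (b - 1))"
proof -
  let ?k = "u ! (b - 1)"
  have "drop (b - 1) u = ?k # drop b u"
    using Cons_nth_drop_Suc[of "b - 1" u] assms by simp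
  then have "Suc (count_list (drop b u) ?k) = count_list (drop (b - 1) u) ?k"
    by simp
  moreover have "drop (b - 1) u = drop (b - 1 - a) (drop a u)" using assms by simp
  then have "count_list (drop (b - 1) u) ?k \<le> count_list (drop a u) ?k"
    using count_list_drop_le by metis
  ultimately show ?thesis by simp
qed

lemma count_list_map_upt: "count_list (map f [a..<b]) k = card {v\<in>{a..<b}. f v = k}"
proof (induction b)
  case (Suc b)
  show ?case
  proof (cases "a \<le> b")
    case True
    then have "{v\<in>{a..<Suc b}. f v = k} = {v\<in>{a..<b}. f v = k} \<union> (if f b = k then {b} else {})"
      by (auto simp: less_Suc_eq)
    then show ?thesis using Suc True by (auto simp: card_insert_if)
  qed simp
qed simp

lemma hits_Nil [simp]: "hits k A [] \<longleftrightarrow> A = 0"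
  by (simp add: hits_def)

lemma hits_Cons:
  "hits k A (c # u) \<longleftrightarrow> A = 0 \<or> ((if c = k then 2 else 1) \<le> A \<and> hits k (A - (if c = k then 2 else 1)) u)"
  (is "_ \<longleftrightarrow> _ \<or> (?d \<le> A \<and> _)")
proof
  assume "hits k A (c # u)"
  then obtain t where t: "t \<le> Suc (length u)" "t + count_list (take t (c # u)) k = A"
    by (auto simp: hits_def)
  show "A = 0 \<or> (?d \<le> A \<and> hits k (A - ?d) u)"
  proof (cases t)
    case (Suc t')
    then have "t' \<le> length u" "t' + count_list (take t' u) k = A - ?d" "?d \<le> A"
      using t by auto
    then show ?thesis unfolding hits_def by blast
  qed (use t in simp)
next
  assume h: "A = 0 \<or> (?d \<le> A \<and> hits k (A - ?d) u)"
  show "hits k A (c # u)"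
  proof (cases "A = 0")
    case True then show ?thesis unfolding hits_def by (intro exI[of _ 0]) simp
  next
    case False
    with h obtain t where "t \<le> length u" "t + count_list (take t u) k = A - ?d" "?d \<le> A"
      by (auto simp: hits_def)
    then show ?thesis unfolding hits_def by (intro exI[of _ "Suc t"]) (auto split: if_splits)
  qed
qed

lemma hits_take:
  assumes "A \<le> l"
  shows "hits k A (take l u) \<longleftrightarrow> hits k A u"
proof
  assume "hits k A (take l u)"
  then obtain t where "t \<le> length (take l u)" "t + count_list (take t (take l u)) k = A"
    by (auto simp: hits_def)
  then show "hits k A u" unfolding hits_def by (intro exI[of _ t]) (auto simp: min_def split: if_splits)
next
  assume "hits k A u"
  then obtain t where t: "t \<le> length u" "t + count_list (take t u) k = A"
    by (auto simp: hits_def)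
  then have "t \<le> l" using assms by linarith
  with t show "hits k A (take l u)" unfolding hits_def by (intro exI[of _ t]) (auto simp: min_def)
qed

text \<open>Inside \<open>p\<close> the walk stays below the target unless \<open>q\<close> contains no \<open>k\<close>.\<close>

lemma hits_append_end:
  assumes "A = length p + count_list p k + count_list q k"
  shows "hits k A (p @ q) \<longleftrightarrow> hits k (count_list q k) q"
proof
  assume "hits k A (p @ q)"
  then obtain t where t: "t \<le> length (p @ q)" "t + count_list (take t (p @ q)) k = A"
    by (auto simp: hits_def)
  show "hits k (count_list q k) q"
  proof (cases "t \<le> length p")
    case True
    have "count_list (take t p) k \<le> count_list p k"
      using count_list_take_drop[of t p k] by linarith
    then have "count_list q k = 0" using t True assms by simp
    then show ?thesis unfolding hits_def by (intro exI[of _ 0]) simp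
  next
    case False
    then show ?thesis using t assms unfolding hits_def
      by (intro exI[of _ "t - length p"]) auto
  qed
next
  assume "hits k (count_list q k) q"
  then obtain t where "t \<le> length q" "t + count_list (take t q) k = count_list q k"
    by (auto simp: hits_def)
  then show "hits k A (p @ q)" unfolding hits_def
    by (intro exI[of _ "length p + t"]) (use assms in auto)
qed

lemma hits_snoc:
  "hits k A (u @ [c]) \<longleftrightarrow> hits k A u \<or> A = length u + 1 + count_list (u @ [c]) k"
proof
  assume "hits k A (u @ [c])"
  then obtain t where t: "t \<le> Suc (length u)" "t + count_list (take t (u @ [c])) k = A"
    by (auto simp: hits_def)
  show "hits k A u \<or> A = length u + 1 + count_list (u @ [c]) k"
  proof (cases "t \<le> length u")
    case True then show ?thesis using t unfolding hits_def by (intro disjI1 exI[of _ t]) auto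
  next
    case False then show ?thesis using t by (simp add: le_Suc_eq)
  qed
next
  assume "hits k A u \<or> A = length u + 1 + count_list (u @ [c]) k"
  then show "hits k A (u @ [c])"
  proof
    assume "hits k A u"
    then obtain t where "t \<le> length u" "t + count_list (take t u) k = A"
      by (auto simp: hits_def)
    then show ?thesis unfolding hits_def by (intro exI[of _ t]) auto
  next
    assume "A = length u + 1 + count_list (u @ [c]) k"
    then show ?thesis unfolding hits_def by (intro exI[of _ "length u + 1"]) simp
  qed
qed

lemma hits_rev:
  assumes "A \<le> length u + count_list u k"
  shows "hits k A (rev u) \<longleftrightarrow> hits k (length u + count_list u k - A) u"
proof -
  have reflect: "t + count_list (take t (rev u)) k =
      length u + count_list u k - ((length u - t) + count_list (take (length u - t) u) k)"
    if "t \<le> length u" for t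
    using that count_list_take_drop[of "length u - t" u k] by (simp add: take_rev)
  have le: "t + count_list (take t u) k \<le> length u + count_list u k" if "t \<le> length u" for t
    using that count_list_take_drop[of t u k] by linarith
  show ?thesis
  proof
    assume "hits k A (rev u)"
    then obtain t where "t \<le> length u" "t + count_list (take t (rev u)) k = A"
      by (auto simp: hits_def)
    then show "hits k (length u + count_list u k - A) u" unfolding hits_def
      using reflect le[of "length u - t"] by (intro exI[of _ "length u - t"]) auto
  next
    assume "hits k (length u + count_list u k - A) u"
    then obtain t where "t \<le> length u" "t + count_list (take t u) k = length u + count_list u k - A"
      by (auto simp: hits_def)
    then show "hits k A (rev u)" unfolding hits_def
      using reflect[of "length u - t"] assms by (intro exI[of _ "length u - t"]) auto
  qed
qed

definition jumps_over :: "'a \<Rightarrow> nat \<Rightarrow> 'a list \<Rightarrow> bool" where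
  "jumps_over k A u \<longleftrightarrow> (\<exists>i<length u. u ! i = k \<and> i + count_list (take i u) k + 1 = A)"

lemma jumps_over_Cons:
  "jumps_over k A (c # u) \<longleftrightarrow>
    (c = k \<and> A = 1) \<or> ((if c = k then 2 else 1) \<le> A \<and> jumps_over k (A - (if c = k then 2 else 1)) u)"
  (is "_ \<longleftrightarrow> _ \<or> (?d \<le> A \<and> _)")
proof
  assume "jumps_over k A (c # u)"
  then obtain i where i: "i < Suc (length u)" "(c # u) ! i = k"
      "i + count_list (take i (c # u)) k + 1 = A"
    by (auto simp: jumps_over_def)
  show "(c = k \<and> A = 1) \<or> (?d \<le> A \<and> jumps_over k (A - ?d) u)"
  proof (cases i)
    case (Suc j)
    then have "j < length u" "u ! j = k" "j + count_list (take j u) k + 1 = A - ?d" "?d \<le> A"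
      using i by auto
    then show ?thesis unfolding jumps_over_def by blast
  qed (use i in simp)
next
  assume "(c = k \<and> A = 1) \<or> (?d \<le> A \<and> jumps_over k (A - ?d) u)"
  then show "jumps_over k A (c # u)"
  proof
    assume "c = k \<and> A = 1"
    then show ?thesis unfolding jumps_over_def by (intro exI[of _ 0]) auto
  next
    assume "?d \<le> A \<and> jumps_over k (A - ?d) u"
    then obtain j where "?d \<le> A" "j < length u" "u ! j = k" "j + count_list (take j u) k + 1 = A - ?d"
      by (auto simp: jumps_over_def)
    then show ?thesis unfolding jumps_over_def by (intro exI[of _ "Suc j"]) (auto split: if_splits)
  qed
qed

text \<open>The walk increases by at most 2 per step, so it misses a value below its final value
  exactly when a letter \<open>k\<close> makes it jump over that value.\<close>

lemma hits_iff_not_jumps_over: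
  "A \<le> length u + count_list u k \<Longrightarrow> hits k A u \<longleftrightarrow> \<not> jumps_over k A u"
proof (induction u arbitrary: A)
  case Nil
  then show ?case by (simp add: jumps_over_def)
next
  case (Cons c u)
  define d where "d = (if c = k then 2 else 1 :: nat)"
  have "A - d \<le> length u + count_list u k" using Cons.prems by (auto simp: d_def split: if_splits)
  then have "hits k (A - d) u \<longleftrightarrow> \<not> jumps_over k (A - d) u" by (rule Cons.IH)
  moreover have "c = k \<and> A = 1 \<longleftrightarrow> A \<noteq> 0 \<and> \<not> d \<le> A" by (auto simp: d_def)
  moreover have "\<not> jumps_over k 0 (c # u)" by (simp add: jumps_over_def)
  ultimately show ?case
    unfolding hits_Cons jumps_over_Cons d_def[symmetric] by (cases "A = 0") auto
qed

lemma jumps_over_iff_drop: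
  assumes "c \<le> length u"
  shows "jumps_over k (c + count_list u k) u \<longleftrightarrow>
    (\<exists>i<length u. u ! i = k \<and> c + 1 + count_list (drop (Suc i) u) k = Suc i)"
proof -
  have "i + count_list (take i u) k + 1 = c + count_list u k \<longleftrightarrow>
      c + 1 + count_list (drop (Suc i) u) k = Suc i" if "i < length u" "u ! i = k" for i
  proof -
    have "count_list (take (Suc i) u) k = count_list (take i u) k + 1"
      using that by (simp add: take_Suc_conv_app_nth)
    then show ?thesis using count_list_take_drop[of "Suc i" u k] by linarith
  qed
  then show ?thesis unfolding jumps_over_def by blast
qed

lemma card_hits_Suc_step:
  assumes IH: "\<And>C A'. size C < size B \<Longrightarrow> count C k \<le> A' \<Longrightarrow> A' < size C \<Longrightarrow>
      card {u. mset u = C \<and> hits k A' u} = card {u. mset u = C \<and> hits k (Suc A') u}"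
    and A: "count B k < A" "A < size B"
  shows "card {u. mset u = B \<and> hits k A u} = card {u. mset u = B \<and> hits k (Suc A) u}"
proof -
  have B: "B \<noteq> {#}" using A by auto
  define d where "d x = (if x = k then 2 else 1 :: nat)" for x
  have peel: "card {u. mset u = B - {#x#} \<and> hits k A (x # u)} =
      card {u. mset u = B - {#x#} \<and> hits k (Suc A) (x # u)}" if x: "x \<in># B" for x
  proof -
    have d: "d x \<le> A"
    proof (cases "x = k")
      case True
      then have "0 < count B k" using x by simp
      then have "2 \<le> A" using A by linarith
      then show ?thesis using True by (simp add: d_def)
    qed (use A in \<open>simp add: d_def\<close>)
    have "size (B - {#x#}) < size B" "count (B - {#x#}) k \<le> A - d x" "A - d x < size (B - {#x#})"
      using A d x by (auto simp: d_def size_Diff_singleton)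
    then have "card {u. mset u = B - {#x#} \<and> hits k (A - d x) u} =
        card {u. mset u = B - {#x#} \<and> hits k (Suc (A - d x)) u}"
      by (rule IH)
    moreover have "Suc A - d x = Suc (A - d x)" using d by simp
    ultimately show ?thesis
      using d A by (simp add: hits_Cons d_def[symmetric])
  qed
  show ?thesis
    unfolding card_mset_eq_Cons[OF B] using peel by (intro sum.cong) auto
qed

lemma card_hits_rev:
  assumes "A \<le> size B + count B k"
  shows "card {u. mset u = B \<and> hits k A u} = card {u. mset u = B \<and> hits k (size B + count B k - A) u}"
proof -
  have "hits k A (rev u) \<longleftrightarrow> hits k (size B + count B k - A) u" if "mset u = B" for u
    using that assms hits_rev[of A u k] by (auto simp flip: count_mset)
  then show ?thesis
    by (subst card_mset_eq_rev, intro arg_cong[where f = card] Collect_cong) blast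
qed

text \<open>Away from \<open>A = #k(B)\<close> the first letter can be peeled off; at \<open>A = #k(B)\<close> reversal
  exchanges the pair \<open>A, A + 1\<close> with \<open>size B, size B - 1\<close>.\<close>

lemma card_hits_Suc:
  "count B k \<le> A \<Longrightarrow> A < size B \<Longrightarrow>
    card {u. mset u = B \<and> hits k A u} = card {u. mset u = B \<and> hits k (Suc A) u}"
proof (induction "size B" arbitrary: B A rule: less_induct)
  case less
  show ?case
  proof (cases "count B k < A")
    case True
    then show ?thesis using less.prems by (intro card_hits_Suc_step[OF less.hyps])
  next
    case False
    then have A: "A = count B k" using less.prems by simp
    have "card {u. mset u = B \<and> hits k A u} = card {u. mset u = B \<and> hits k (size B) u}"
      using card_hits_rev[of A B k] A by simp
    moreover have "card {u. mset u = B \<and> hits k (Suc A) u} = card {u. mset u = B \<and> hits k (size B - 1) u}"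
      using card_hits_rev[of "Suc A" B k] A less.prems by simp
    moreover have "card {u. mset u = B \<and> hits k (size B - 1) u} = card {u. mset u = B \<and> hits k (size B) u}"
      if "Suc A < size B"
      using card_hits_Suc_step[OF less.hyps, where A = "size B - 1"] that A by simp
    ultimately show ?thesis using less.prems by (cases "Suc A = size B") auto
  qed
qed

definition hits_count :: "'a \<Rightarrow> 'a list \<Rightarrow> bool" where
  "hits_count k u \<longleftrightarrow> hits k (count_list u k) u"

definition hits_length :: "'a \<Rightarrow> 'a list \<Rightarrow> bool" where
  "hits_length k u \<longleftrightarrow> hits k (length u) u"

lemma hits_count_iff: "mset u = B \<Longrightarrow> hits_count k u \<longleftrightarrow> hits k (count B k) u"
  by (simp add: hits_count_def flip: count_mset)

text \<open>Deleting the last letter keeps the target \<open>#k(B)\<close> reachable, since the walk ends above it;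
  when the deleted letter is \<open>k\<close> the target drops by one, which \<open>card_hits_Suc\<close> absorbs.\<close>

lemma card_hits_count_rec:
  assumes "count B k < size B"
  shows "card {u. mset u = B \<and> hits_count k u} =
    (\<Sum>x\<in>set_mset B. card {u. mset u = B - {#x#} \<and> hits_count k u})"
proof -
  have B: "B \<noteq> {#}" using assms by auto
  have "card {u. mset u = B - {#x#} \<and> hits_count k (u @ [x])} =
      card {u. mset u = B - {#x#} \<and> hits_count k u}" if x: "x \<in># B" for x
  proof -
    have size: "size (B - {#x#}) = size B - 1" using x by (simp add: size_Diff_singleton)
    have "hits_count k (u @ [x]) \<longleftrightarrow> hits k (count B k) u" if "mset u = B - {#x#}" for u
      using that x hits_count_iff[of "u @ [x]" B k] by (simp add: hits_snoc flip: count_mset)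
    then have "card {u. mset u = B - {#x#} \<and> hits_count k (u @ [x])} =
        card {u. mset u = B - {#x#} \<and> hits k (count B k) u}"
      by (intro arg_cong[where f = card] Collect_cong) blast
    also have "\<dots> = card {u. mset u = B - {#x#} \<and> hits k (count (B - {#x#}) k) u}"
    proof (cases "x = k")
      case True
      then have "count B k = Suc (count (B - {#x#}) k)" using x by (simp add: Suc_pred)
      moreover from this have "count (B - {#x#}) k < size (B - {#x#})" using size assms by linarith
      ultimately show ?thesis using card_hits_Suc[of "B - {#x#}" k] by simp
    qed simp
    also have "\<dots> = card {u. mset u = B - {#x#} \<and> hits_count k u}"
      using hits_count_iff[of _ "B - {#x#}" k] by (intro arg_cong[where f = card] Collect_cong) blast
    finally show ?thesis .
  qed
  then show ?thesis
    unfolding card_mset_eq_snoc[OF B, of "hits_count k"] by (intro sum.cong refl) simp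
qed

lemma card_hits_count_butlast:
  assumes "count B k < size B"
  shows "card {u. mset u = B \<and> hits_count k u} = card {u. mset u = B \<and> hits_count k (butlast u)}"
proof -
  have B: "B \<noteq> {#}" using assms by auto
  show ?thesis
    by (simp add: card_hits_count_rec[OF assms] card_mset_eq_snoc[OF B, of "\<lambda>u. hits_count k (butlast u)"])
qed

lemma card_hits_count_tl:
  assumes "count B k < size B"
  shows "card {u. mset u = B \<and> hits_count k u} = card {u. mset u = B \<and> hits_count k (tl u)}"
proof -
  have B: "B \<noteq> {#}" using assms by auto
  show ?thesis
    by (simp add: card_hits_count_rec[OF assms] card_mset_eq_Cons[OF B, of "\<lambda>u. hits_count k (tl u)"])
qed

lemma card_hits_length: "card {u. mset u = B \<and> hits_length k u} = card {u. mset u = B \<and> hits_count k u}"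
  by (subst card_mset_eq_rev) (simp add: hits_length_def hits_count_def hits_rev)

lemma card_hits_length_butlast:
  assumes "count B k < size B"
  shows "card {u. mset u = B \<and> hits_length k u} = card {u. mset u = B \<and> hits_length k (butlast u)}"
proof -
  have B: "B \<noteq> {#}" using assms by auto
  show ?thesis
    by (simp add: card_hits_length card_hits_count_rec[OF assms]
        card_mset_eq_snoc[OF B, of "\<lambda>u. hits_length k (butlast u)"])
qed

section \<open>Words in which the walks of the letters 0 and 1 hit their targets\<close>

definition Nword :: "nat multiset \<Rightarrow> nat" where
  "Nword B = card {w. mset w = B \<and> hits 0 (count B 0) w \<and> hits 1 (count B 0 + count B 1) w}"

text \<open>\<open>Nword B\<close> is \<open>split_count B (count B 0)\<close>: the two walk conditions separate at the cut
  after \<open>#0(B)\<close> letters.\<close>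

definition split_count :: "nat multiset \<Rightarrow> nat \<Rightarrow> nat" where
  "split_count B l = card {w. mset w = B \<and> hits_length 0 (take l w) \<and> hits_count 1 (drop l w)}"

lemma Nword_eq_split_count: "Nword B = split_count B (count B 0)"
proof -
  let ?l = "count B 0"
  have "hits 0 ?l w \<and> hits 1 (?l + count B 1) w \<longleftrightarrow>
      hits_length 0 (take ?l w) \<and> hits_count 1 (drop ?l w)" if w: "mset w = B" for w
  proof -
    have l: "?l \<le> length w" using w by (metis count_le_size size_mset)
    have "count B 1 = count_list (take ?l w) 1 + count_list (drop ?l w) 1"
      using w count_list_take_drop[of ?l w 1] by (simp flip: count_mset)
    then have "hits 1 (?l + count B 1) (take ?l w @ drop ?l w) \<longleftrightarrow> hits_count 1 (drop ?l w)"
      unfolding hits_count_def using l by (intro hits_append_end) simp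
    then show ?thesis
      using hits_take[of ?l ?l 0 w] l by (simp add: hits_length_def min_def)
  qed
  then show ?thesis
    unfolding Nword_def split_count_def by (intro arg_cong[where f = card] Collect_cong) blast
qed

lemma split_count_rec:
  assumes "l + count B 1 < size B"
  shows "split_count B l = (\<Sum>x\<in>set_mset B. split_count (B - {#x#}) l)"
proof -
  have B: "B \<noteq> {#}" using assms by auto
  have l: "l \<le> size B" using assms by linarith
  let ?P = "hits_length (0::nat)" and ?Q = "hits_count (1::nat)"
  have "split_count B l = card {w. mset w = B \<and> ?P (take l w) \<and> ?Q (butlast (drop l w))}"
    unfolding split_count_def card_mset_eq_split[OF l] card_mset_eq_split[OF l, where Q = "\<lambda>q. ?Q (butlast q)"]
  proof (intro sum.cong refl arg_cong[where f = "\<lambda>n. _ * n"])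
    fix C assume "C \<in> {C. C \<subseteq># B \<and> size C = l}"
    then have "size (B - C) = size B - l" by (simp add: size_Diff_submset)
    moreover have "count (B - C) 1 \<le> count B 1" by simp
    ultimately have "count (B - C) 1 < size (B - C)" using assms by linarith
    then show "card {q. mset q = B - C \<and> ?Q q} = card {q. mset q = B - C \<and> ?Q (butlast q)}"
      by (rule card_hits_count_butlast)
  qed
  also have "\<dots> = (\<Sum>x\<in>set_mset B. split_count (B - {#x#}) l)"
    unfolding card_mset_eq_snoc[OF B] split_count_def
  proof (intro sum.cong refl arg_cong[where f = card] Collect_cong)
    fix x w assume x: "x \<in> set_mset B"
    have "l \<le> length w" if "mset w = B - {#x#}"
    proof -
      have "length w = size B - 1" using that x by (metis size_mset size_Diff_singleton)
      then show ?thesis using assms by linarith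
    qed
    then show "(mset w = B - {#x#} \<and> ?P (take l (w @ [x])) \<and> ?Q (butlast (drop l (w @ [x])))) \<longleftrightarrow>
        (mset w = B - {#x#} \<and> ?P (take l w) \<and> ?Q (drop l w))"
      by auto
  qed
  finally show ?thesis .
qed

text \<open>Moving the cut one step to the left: the last letter of the prefix is dropped from the prefix
  condition and the first letter of the suffix from the suffix condition.\<close>

lemma split_count_pred:
  assumes "count B 0 < l" and "l + count B 1 \<le> size B"
  shows "split_count B l = split_count B (l - 1)"
proof -
  have l: "l \<le> size B" "l - 1 \<le> size B" using assms by linarith+
  let ?P = "hits_length (0::nat)" and ?Q = "hits_count (1::nat)"
  have "split_count B l = card {w. mset w = B \<and> ?P (butlast (take l w)) \<and> ?Q (drop l w)}"
    unfolding split_count_def card_mset_eq_split[OF l(1)]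
      card_mset_eq_split[OF l(1), where P = "\<lambda>p. ?P (butlast p)"]
  proof (intro sum.cong refl arg_cong[where f = "\<lambda>n. n * _"])
    fix C assume "C \<in> {C. C \<subseteq># B \<and> size C = l}"
    then have "count C 0 < size C" using assms(1) mset_subset_eq_count[of C B 0] by auto
    then show "card {p. mset p = C \<and> ?P p} = card {p. mset p = C \<and> ?P (butlast p)}"
      by (rule card_hits_length_butlast)
  qed
  also have "\<dots> = card {w. mset w = B \<and> ?P (take (l - 1) w) \<and> ?Q (tl (drop (l - 1) w))}"
  proof (intro arg_cong[where f = card] Collect_cong)
    fix w :: "nat list"
    obtain l' where "l = Suc l'" using assms(1) by (cases l) auto
    then have "drop l w = tl (drop (l - 1) w)" by (simp add: drop_Suc tl_drop)
    moreover have "mset w = B \<Longrightarrow> butlast (take l w) = take (l - 1) w"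
      using l(1) by (metis butlast_take size_mset)
    ultimately show "(mset w = B \<and> ?P (butlast (take l w)) \<and> ?Q (drop l w)) \<longleftrightarrow>
        (mset w = B \<and> ?P (take (l - 1) w) \<and> ?Q (tl (drop (l - 1) w)))"
      by auto
  qed
  also have "\<dots> = split_count B (l - 1)"
    unfolding split_count_def card_mset_eq_split[OF l(2)]
      card_mset_eq_split[OF l(2), where Q = "\<lambda>q. ?Q (tl q)"]
  proof (intro sum.cong refl arg_cong[where f = "\<lambda>n. _ * n"])
    fix C assume "C \<in> {C. C \<subseteq># B \<and> size C = l - 1}"
    then have "size (B - C) = size B - (l - 1)" by (simp add: size_Diff_submset)
    moreover have "count (B - C) 1 \<le> count B 1" by simp
    ultimately have "count (B - C) 1 < size (B - C)" using assms by linarith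
    then show "card {q. mset q = B - C \<and> ?Q (tl q)} = card {q. mset q = B - C \<and> ?Q q}"
      by (rule card_hits_count_tl[symmetric])
  qed
  finally show ?thesis .
qed

lemma Nword_rec:
  assumes "count B 0 + count B 1 < size B"
  shows "Nword B = (\<Sum>x\<in>set_mset B. Nword (B - {#x#}))"
proof -
  have "split_count (B - {#x#}) (count B 0) = Nword (B - {#x#})" if x: "x \<in># B" for x
  proof (cases "x = 0")
    case True
    have "size (B - {#x#}) = size B - 1" using x by (simp add: size_Diff_singleton)
    moreover have "count (B - {#x#}) 0 = count B 0 - 1" "count (B - {#x#}) 1 = count B 1"
      using True by auto
    moreover have "0 < count B 0" using x True by simp
    ultimately show ?thesis
      using assms split_count_pred[of "B - {#x#}" "count B 0"] by (simp add: Nword_eq_split_count)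
  qed (simp add: Nword_eq_split_count)
  then show ?thesis
    using split_count_rec[of "count B 0" B] assms by (simp add: Nword_eq_split_count)
qed

section \<open>Permutations decreasing on classes\<close>

definition dec_on_classes :: "nat set \<Rightarrow> (nat \<Rightarrow> 'b) \<Rightarrow> (nat \<Rightarrow> nat) \<Rightarrow> bool" where
  "dec_on_classes S f q \<longleftrightarrow> (\<forall>i\<in>S. \<forall>j\<in>S. i < j \<longrightarrow> f i = f j \<longrightarrow> q j < q i)"

lemma dec_on_classes_inv:
  assumes q: "q permutes S" and dec: "dec_on_classes S f q"
  shows "dec_on_classes S (f \<circ> inv q) (inv q)"
  unfolding dec_on_classes_def
proof (intro ballI impI)
  fix a b assume ab: "a \<in> S" "b \<in> S" "a < b" and f: "(f \<circ> inv q) a = (f \<circ> inv q) b"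
  have S: "inv q a \<in> S" "inv q b \<in> S" using ab permutes_in_image[OF permutes_inv[OF q]] by auto
  have q_inv: "q (inv q a) = a" "q (inv q b) = b" using permutes_inverses(1)[OF q] by auto
  show "inv q b < inv q a"
  proof (rule ccontr)
    assume "\<not> inv q b < inv q a"
    moreover have "inv q a \<noteq> inv q b" using q_inv ab(3) by (metis less_irrefl)
    ultimately have "q (inv q b) < q (inv q a)" using dec S f unfolding dec_on_classes_def by auto
    then show False using q_inv ab(3) by simp
  qed
qed

lemma card_dec_on_classes_inv:
  "card {p. p permutes S \<and> dec_on_classes S f p \<and> (\<forall>i\<in>F. p i \<noteq> i)} =
    card {s. s permutes S \<and> dec_on_classes S (f \<circ> s) s \<and> (\<forall>i\<in>F. s i \<noteq> i)}"
proof (rule bij_betw_same_card[of inv], rule bij_betw_byWitness[where f' = inv])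
  have fixpoints: "(\<forall>i\<in>F. inv p i \<noteq> i) \<longleftrightarrow> (\<forall>i\<in>F. p i \<noteq> i)" if "p permutes S" for p
    using permutes_inv_eq[OF that] by metis
  show "inv ` {p. p permutes S \<and> dec_on_classes S f p \<and> (\<forall>i\<in>F. p i \<noteq> i)}
      \<subseteq> {s. s permutes S \<and> dec_on_classes S (f \<circ> s) s \<and> (\<forall>i\<in>F. s i \<noteq> i)}"
  proof clarify
    fix p assume p: "p permutes S" "dec_on_classes S f p" "\<forall>i\<in>F. p i \<noteq> i"
    have "f \<circ> inv (inv p) \<circ> inv p = f"
      using p(1) by (simp add: permutes_inv_inv permutes_inv_o(1) comp_assoc)
    then show "inv p permutes S \<and> dec_on_classes S (f \<circ> inv p) (inv p) \<and> (\<forall>i\<in>F. inv p i \<noteq> i)"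
      using p fixpoints dec_on_classes_inv permutes_inv by metis
  qed
  show "inv ` {s. s permutes S \<and> dec_on_classes S (f \<circ> s) s \<and> (\<forall>i\<in>F. s i \<noteq> i)}
      \<subseteq> {p. p permutes S \<and> dec_on_classes S f p \<and> (\<forall>i\<in>F. p i \<noteq> i)}"
  proof clarify
    fix s assume s: "s permutes S" "dec_on_classes S (f \<circ> s) s" "\<forall>i\<in>F. s i \<noteq> i"
    have "f \<circ> s \<circ> inv s = f"
      using s(1) by (simp add: permutes_inv_o(1) comp_assoc)
    then show "inv s permutes S \<and> dec_on_classes S f (inv s) \<and> (\<forall>i\<in>F. inv s i \<noteq> i)"
      using s fixpoints dec_on_classes_inv[OF s(1,2)] permutes_inv by metis
  qed
qed (auto simp: permutes_inv_inv)

lemma card_preimage_permutes: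
  assumes "s permutes S"
  shows "card {v\<in>S. f (s v) = k} = card {i\<in>S. f i = k}"
proof -
  have "s ` {v\<in>S. f (s v) = k} = {i\<in>S. f i = k}"
  proof
    show "{i\<in>S. f i = k} \<subseteq> s ` {v\<in>S. f (s v) = k}"
    proof
      fix i assume i: "i \<in> {i\<in>S. f i = k}"
      have "s (inv s i) = i" "inv s i \<in> S"
        using i permutes_inverses(1)[OF assms] permutes_in_image[OF permutes_inv[OF assms]] by auto
      then show "i \<in> s ` {v\<in>S. f (s v) = k}" using i by (intro image_eqI[of _ _ "inv s i"]) auto
    qed
  next
    show "s ` {v\<in>S. f (s v) = k} \<subseteq> {i\<in>S. f i = k}"
      using permutes_in_image[OF assms] by auto
  qed
  moreover have "inj_on s {v\<in>S. f (s v) = k}" using permutes_inj_on[OF assms] .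
  ultimately show ?thesis by (simp add: card_image flip: \<open>s ` _ = _\<close>)
qed

text \<open>A strictly decreasing map of a finite set \<open>C\<close> into an interval of size \<open>card C\<close> is onto,
  so its value at \<open>v\<close> is determined by the number of elements of \<open>C\<close> after \<open>v\<close>.\<close>

lemma dec_into_interval_eq:
  fixes g :: "nat \<Rightarrow> nat"
  assumes "finite C" "v \<in> C" and into: "g ` C \<subseteq> {a<..b}" and card: "card C = b - a"
    and dec: "\<And>u u'. u \<in> C \<Longrightarrow> u' \<in> C \<Longrightarrow> u < u' \<Longrightarrow> g u' < g u"
  shows "g v = a + 1 + card {u\<in>C. v < u}"
proof -
  let ?above = "{u\<in>C. v < u}" and ?below = "{u\<in>C. u < v}"
  have inj: "inj_on g C"
    by (rule inj_onI) (metis dec linorder_neqE_nat less_irrefl)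
  have "g ` ?above \<subseteq> {a<..<g v}" using into dec assms(2) by auto
  then have above: "card ?above \<le> g v - a - 1"
    using card_mono[of "{a<..<g v}" "g ` ?above"] card_image[OF inj_on_subset[OF inj]] by fastforce
  have "g ` ?below \<subseteq> {g v<..b}" using into dec assms(2) by auto
  then have below: "card ?below \<le> b - g v"
    using card_mono[of "{g v<..b}" "g ` ?below"] card_image[OF inj_on_subset[OF inj]] by fastforce
  have "C = ?below \<union> insert v ?above" using assms(2) by auto
  then have "card C = card ?below + card (insert v ?above)"
    using assms(1) by (metis (no_types, lifting) card_Un_disjoint disjoint_iff finite_Un
        insert_iff less_asym mem_Collect_eq)
  also have "card (insert v ?above) = Suc (card ?above)" using assms(1) by simp
  finally have "card C = card ?below + Suc (card ?above)" .
  moreover have "a < g v" "g v \<le> b" using into assms(2) by auto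
  ultimately show ?thesis using above below card by linarith
qed

section \<open>Block-decreasing permutations and words\<close>

context
  fixes L1 L2 L3 L4 :: nat
begin

definition total_len :: nat where
  "total_len = L1 + L2 + L3 + L4"

definition block_of :: "nat \<Rightarrow> nat" where
  "block_of i = (if i \<le> L1 then 0 else if i \<le> L1 + L2 then 1 else if i \<le> L1 + L2 + L3 then 2 else 3)"

definition block_start :: "nat \<Rightarrow> nat" where
  "block_start k = (if k = 0 then 0 else if k = 1 then L1 else if k = 2 then L1 + L2 else L1 + L2 + L3)"

definition block_len :: "nat \<Rightarrow> nat" where
  "block_len k = (if k = 0 then L1 else if k = 1 then L2 else if k = 2 then L3 else L4)"

definition block_letters :: "nat multiset" where
  "block_letters = replicate_mset L1 0 + replicate_mset L2 1 + replicate_mset L3 2 + replicate_mset L4 3"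

lemma block_of_le: "block_of i \<le> 3"
  by (simp add: block_of_def)

lemma block_of_iff:
  "1 \<le> i \<Longrightarrow> i \<le> total_len \<Longrightarrow> k \<le> 3 \<Longrightarrow>
    block_of i = k \<longleftrightarrow> block_start k < i \<and> i \<le> block_start k + block_len k"
  by (auto simp: block_of_def block_start_def block_len_def total_len_def)

lemma block_of_in_interval:
  "i \<in> {1..total_len} \<Longrightarrow> block_of i = k \<Longrightarrow> i \<in> {block_start k<..block_start k + block_len k}"
  using block_of_iff[of i k] block_of_le[of i] by auto

lemma block_end_le: "k \<le> 3 \<Longrightarrow> block_start k + block_len k \<le> total_len"
  by (auto simp: block_start_def block_len_def total_len_def)

lemma count_block_letters: "count block_letters k = (if k \<le> 3 then block_len k else 0)"
  by (auto simp: block_letters_def block_len_def)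

lemma size_block_letters: "size block_letters = total_len"
  by (simp add: block_letters_def total_len_def)

lemma card_block: "card {i\<in>{1..total_len}. block_of i = k} = count block_letters k"
proof (cases "k \<le> 3")
  case True
  then have "{i\<in>{1..total_len}. block_of i = k} = {block_start k + 1..block_start k + block_len k}"
    by (auto simp: block_of_def block_start_def block_len_def total_len_def)
  then show ?thesis using True by (simp add: count_block_letters)
qed (use block_of_le in \<open>auto simp: count_block_letters not_le[symmetric]\<close>)

lemma dec_on_blocks_iff:
  "dec_on p 1 L1 \<and> dec_on p (L1+1) (L1+L2) \<and> dec_on p (L1+L2+1) (L1+L2+L3)
    \<and> dec_on p (L1+L2+L3+1) (L1+L2+L3+L4) \<longleftrightarrow> dec_on_classes {1..total_len} block_of p"
proof
  assume "dec_on p 1 L1 \<and> dec_on p (L1+1) (L1+L2) \<and> dec_on p (L1+L2+1) (L1+L2+L3)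
    \<and> dec_on p (L1+L2+L3+1) (L1+L2+L3+L4)"
  then show "dec_on_classes {1..total_len} block_of p"
    unfolding dec_on_classes_def dec_on_def block_of_def total_len_def by (auto split: if_splits)
next
  assume dec: "dec_on_classes {1..total_len} block_of p"
  have blocks: "p j < p i" if "lo \<le> i" "i < j" "j \<le> hi"
    "(lo, hi) \<in> {(1, L1), (L1+1, L1+L2), (L1+L2+1, L1+L2+L3), (L1+L2+L3+1, L1+L2+L3+L4)}" for lo hi i j
  proof -
    have "block_of i = block_of j" using that by (auto simp: block_of_def)
    moreover have "i \<in> {1..total_len}" "j \<in> {1..total_len}" using that by (auto simp: total_len_def)
    ultimately show ?thesis using dec \<open>i < j\<close> by (auto simp: dec_on_classes_def)
  qed
  show "dec_on p 1 L1 \<and> dec_on p (L1+1) (L1+L2) \<and> dec_on p (L1+L2+1) (L1+L2+L3)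
    \<and> dec_on p (L1+L2+L3+1) (L1+L2+L3+L4)"
    unfolding dec_on_def using blocks[of 1 _ _ L1] blocks[of "L1+1" _ _ "L1+L2"]
      blocks[of "L1+L2+1" _ _ "L1+L2+L3"] blocks[of "L1+L2+L3+1" _ _ "L1+L2+L3+L4"] by auto
qed

lemma Nblk_eq_card_dec_on_classes:
  "Nblk L1 L2 L3 L4 = card {p. p permutes {1..total_len} \<and> dec_on_classes {1..total_len} block_of p
    \<and> (\<forall>i\<in>{1..L1+L2}. p i \<noteq> i)}"
  unfolding Nblk_def dec_on_blocks_iff[symmetric] unfolding total_len_def by (simp add: conj_assoc)

definition block_word :: "(nat \<Rightarrow> nat) \<Rightarrow> nat list" where
  "block_word s = map (\<lambda>v. block_of (s v)) [1..<Suc total_len]"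

text \<open>Inverse of \<open>block_word\<close> on permutations decreasing on the classes of \<open>block_of \<circ> s\<close>:
  the \<open>v\<close>-th letter \<open>k\<close> is sent to the block-\<open>k\<close> value whose rank from the top of the block
  is the number of later occurrences of \<open>k\<close>.\<close>

definition word_perm :: "nat list \<Rightarrow> nat \<Rightarrow> nat" where
  "word_perm w v = (if v \<in> {1..total_len}
     then block_start (w ! (v - 1)) + 1 + count_list (drop v w) (w ! (v - 1)) else v)"

lemma length_block_letters: "mset w = block_letters \<Longrightarrow> length w = total_len"
  by (metis size_block_letters size_mset)

lemma nth_block_letters_le:
  assumes "mset w = block_letters" "i < length w"
  shows "w ! i \<le> 3"
proof -
  have "w ! i \<in># block_letters" using assms by (metis nth_mem set_mset_mset)
  then have "0 < count block_letters (w ! i)" by simp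
  then show ?thesis by (simp add: count_block_letters split: if_splits)
qed

lemma count_list_block_letters:
  "mset w = block_letters \<Longrightarrow> k \<le> 3 \<Longrightarrow> count_list w k = block_len k"
  by (simp add: count_block_letters flip: count_mset)

lemma word_perm_in_block:
  assumes w: "mset w = block_letters" and v: "v \<in> {1..total_len}"
  shows "word_perm w v \<in> {1..total_len}" "block_of (word_perm w v) = w ! (v - 1)"
proof -
  let ?k = "w ! (v - 1)"
  have len: "length w = total_len" using length_block_letters[OF w] .
  have k: "?k \<le> 3" using nth_block_letters_le[OF w] v len by auto
  have "count_list (drop v w) ?k < count_list (drop 0 w) ?k"
    using count_list_drop_nth_less[of 0 v w] v len by auto
  then have "block_start ?k < word_perm w v" "word_perm w v \<le> block_start ?k + block_len ?k"
    using v count_list_block_letters[OF w k] by (auto simp: word_perm_def)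
  then show in_range: "word_perm w v \<in> {1..total_len}" using block_end_le[OF k] by auto
  show "block_of (word_perm w v) = ?k"
    using block_of_iff[of "word_perm w v" ?k] in_range k \<open>block_start ?k < _\<close> \<open>_ \<le> block_start ?k + _\<close>
    by auto
qed

lemma word_perm_dec:
  assumes w: "mset w = block_letters" and ab: "1 \<le> a" "a < b" "b \<le> total_len"
    and eq: "w ! (a - 1) = w ! (b - 1)"
  shows "word_perm w b < word_perm w a"
proof -
  have "count_list (drop b w) (w ! (b - 1)) < count_list (drop a w) (w ! (b - 1))"
    using count_list_drop_nth_less[of a b w] ab length_block_letters[OF w] by simp
  then show ?thesis using ab eq by (simp add: word_perm_def)
qed

lemma dec_on_classes_word_perm:
  assumes w: "mset w = block_letters"
  shows "dec_on_classes {1..total_len} (block_of \<circ> word_perm w) (word_perm w)"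
  unfolding dec_on_classes_def
proof (intro ballI impI)
  fix a b assume ab: "a \<in> {1..total_len}" "b \<in> {1..total_len}" "a < b"
    and "(block_of \<circ> word_perm w) a = (block_of \<circ> word_perm w) b"
  then have "w ! (a - 1) = w ! (b - 1)" using word_perm_in_block(2)[OF w] by simp
  then show "word_perm w b < word_perm w a" using word_perm_dec[OF w] ab by simp
qed

lemma word_perm_permutes:
  assumes w: "mset w = block_letters"
  shows "word_perm w permutes {1..total_len}"
proof (rule bij_imp_permutes)
  have "inj_on (word_perm w) {1..total_len}"
  proof (rule inj_onI, rule ccontr)
    fix a b assume ab: "a \<in> {1..total_len}" "b \<in> {1..total_len}" "word_perm w a = word_perm w b" "a \<noteq> b"
    then have "(block_of \<circ> word_perm w) a = (block_of \<circ> word_perm w) b" by simp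
    then show False
      using dec_on_classes_word_perm[OF w] ab unfolding dec_on_classes_def
      by (metis less_irrefl linorder_neqE_nat)
  qed
  moreover have "word_perm w ` {1..total_len} \<subseteq> {1..total_len}"
    using word_perm_in_block(1)[OF w] by auto
  ultimately show "bij_betw (word_perm w) {1..total_len} {1..total_len}"
    by (simp add: bij_betw_def endo_inj_surj)
qed (auto simp: word_perm_def)

lemma block_word_word_perm:
  assumes w: "mset w = block_letters"
  shows "block_word (word_perm w) = w"
proof (rule nth_equalityI)
  show "length (block_word (word_perm w)) = length w"
    using length_block_letters[OF w] by (simp add: block_word_def)
  fix i assume "i < length (block_word (word_perm w))"
  then have "i < total_len" by (simp add: block_word_def del: upt_Suc)
  then show "block_word (word_perm w) ! i = w ! i"
    using word_perm_in_block(2)[OF w, of "Suc i"] by (simp add: block_word_def nth_map_upt del: upt_Suc)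
qed

lemma word_perm_fixpoint_iff:
  assumes w: "mset w = block_letters" and k: "k \<le> 3"
  shows "(\<exists>v\<in>{1..total_len}. block_of v = k \<and> word_perm w v = v) \<longleftrightarrow>
    jumps_over k (block_start k + block_len k) w"
proof -
  have len: "length w = total_len" using length_block_letters[OF w] .
  have "(\<exists>v\<in>{1..total_len}. block_of v = k \<and> word_perm w v = v) \<longleftrightarrow>
      (\<exists>i<length w. w ! i = k \<and> block_start k + 1 + count_list (drop (Suc i) w) k = Suc i)"
  proof
    assume "\<exists>v\<in>{1..total_len}. block_of v = k \<and> word_perm w v = v"
    then obtain v where v: "v \<in> {1..total_len}" "block_of v = k" "word_perm w v = v" by blast
    then have "w ! (v - 1) = k" using word_perm_in_block(2)[OF w v(1)] by simp
    then show "\<exists>i<length w. w ! i = k \<and> block_start k + 1 + count_list (drop (Suc i) w) k = Suc i"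
      using v len by (intro exI[of _ "v - 1"]) (auto simp: word_perm_def)
  next
    assume "\<exists>i<length w. w ! i = k \<and> block_start k + 1 + count_list (drop (Suc i) w) k = Suc i"
    then obtain i where i: "i < length w" "w ! i = k" "block_start k + 1 + count_list (drop (Suc i) w) k = Suc i"
      by blast
    then have v: "Suc i \<in> {1..total_len}" using len by simp
    moreover have fixed: "word_perm w (Suc i) = Suc i" using v i by (simp add: word_perm_def)
    moreover have "block_of (Suc i) = k" using word_perm_in_block(2)[OF w v] fixed i by simp
    ultimately show "\<exists>v\<in>{1..total_len}. block_of v = k \<and> word_perm w v = v" by blast
  qed
  also have "\<dots> \<longleftrightarrow> jumps_over k (block_start k + count_list w k) w"
    using jumps_over_iff_drop[of "block_start k" w k] block_end_le[OF k] len by simp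
  finally show ?thesis using count_list_block_letters[OF w k] by simp
qed

lemma word_perm_fixpoint_free_iff:
  assumes w: "mset w = block_letters"
  shows "(\<forall>i\<in>{1..L1+L2}. word_perm w i \<noteq> i) \<longleftrightarrow> hits 0 L1 w \<and> hits 1 (L1+L2) w"
proof -
  have "{1..L1+L2} = {v\<in>{1..total_len}. block_of v = 0} \<union> {v\<in>{1..total_len}. block_of v = 1}"
    by (auto simp: block_of_def total_len_def split: if_splits)
  then have "(\<forall>i\<in>{1..L1+L2}. word_perm w i \<noteq> i) \<longleftrightarrow>
      \<not> jumps_over 0 (block_start 0 + block_len 0) w \<and> \<not> jumps_over 1 (block_start 1 + block_len 1) w"
    using word_perm_fixpoint_iff[OF w, of 0] word_perm_fixpoint_iff[OF w, of 1] by auto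
  moreover have "L1 \<le> length w + count_list w 0" "L1 + L2 \<le> length w + count_list w 1"
    using length_block_letters[OF w] by (auto simp: total_len_def)
  ultimately show ?thesis
    by (simp add: hits_iff_not_jumps_over block_start_def block_len_def)
qed

lemma mset_block_word:
  assumes s: "s permutes {1..total_len}"
  shows "mset (block_word s) = block_letters"
proof (rule multiset_eqI)
  fix k
  have "count (mset (block_word s)) k = card {v\<in>{1..<Suc total_len}. block_of (s v) = k}"
    unfolding count_mset block_word_def by (rule count_list_map_upt)
  also have "\<dots> = card {v\<in>{1..total_len}. block_of (s v) = k}"
    by (simp add: atLeastLessThanSuc_atLeastAtMost)
  also have "\<dots> = count block_letters k"
    using card_preimage_permutes[OF s] card_block by metis
  finally show "count (mset (block_word s)) k = count block_letters k" .
qed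

lemma word_perm_block_word:
  assumes s: "s permutes {1..total_len}" and dec: "dec_on_classes {1..total_len} (block_of \<circ> s) s"
  shows "word_perm (block_word s) = s"
proof
  fix v
  show "word_perm (block_word s) v = s v"
  proof (cases "v \<in> {1..total_len}")
    case False
    then show ?thesis using permutes_not_in[OF s False] unfolding word_perm_def by auto
  next
    case v: True
    define k where "k = block_of (s v)"
    let ?C = "{u\<in>{1..total_len}. block_of (s u) = k}"
    have k: "k \<le> 3" by (simp add: k_def block_of_le)
    have "block_word s ! (v - 1) = block_of (s (1 + (v - 1)))"
      unfolding block_word_def by (rule nth_map_upt) (use v in auto)
    then have nth: "block_word s ! (v - 1) = k" using v by (simp add: k_def)
    have "count_list (drop v (block_word s)) k = card {u\<in>{Suc v..<Suc total_len}. block_of (s u) = k}"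
      unfolding block_word_def drop_map by (simp add: count_list_map_upt del: upt_Suc)
    also have "\<dots> = card {u\<in>?C. v < u}"
      by (rule arg_cong[where f = card]) auto
    finally have "word_perm (block_word s) v = block_start k + 1 + card {u\<in>?C. v < u}"
      using v nth by (simp add: word_perm_def)
    also have "\<dots> = s v"
    proof (rule sym, rule dec_into_interval_eq)
      show "s ` ?C \<subseteq> {block_start k<..block_start k + block_len k}"
        using permutes_in_image[OF s] block_of_in_interval by blast
      show "card ?C = block_start k + block_len k - block_start k"
        using card_preimage_permutes[OF s, of block_of k] card_block[of k] count_block_letters k by simp
      show "\<And>u u'. u \<in> ?C \<Longrightarrow> u' \<in> ?C \<Longrightarrow> u < u' \<Longrightarrow> s u' < s u"
        using dec by (auto simp: dec_on_classes_def)
    qed (use v k_def in auto)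
    finally show ?thesis .
  qed
qed

lemma card_dec_on_classes_eq_Nword:
  "card {s. s permutes {1..total_len} \<and> dec_on_classes {1..total_len} (block_of \<circ> s) s
    \<and> (\<forall>i\<in>{1..L1+L2}. s i \<noteq> i)} = Nword block_letters"
proof -
  have "Nword block_letters = card {w. mset w = block_letters \<and> hits 0 L1 w \<and> hits 1 (L1+L2) w}"
    by (simp add: Nword_def count_block_letters block_len_def)
  moreover have "bij_betw block_word
      {s. s permutes {1..total_len} \<and> dec_on_classes {1..total_len} (block_of \<circ> s) s
        \<and> (\<forall>i\<in>{1..L1+L2}. s i \<noteq> i)}
      {w. mset w = block_letters \<and> hits 0 L1 w \<and> hits 1 (L1+L2) w}"
  proof (rule bij_betw_byWitness[where f' = word_perm], safe)
    fix s assume s: "s permutes {1..total_len}" "dec_on_classes {1..total_len} (block_of \<circ> s) s"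
      and free: "\<forall>i\<in>{1..L1+L2}. s i \<noteq> i"
    show "word_perm (block_word s) = s" "mset (block_word s) = block_letters"
      using word_perm_block_word[OF s] mset_block_word[OF s(1)] by auto
    then show "hits 0 L1 (block_word s)" "hits 1 (L1 + L2) (block_word s)"
      using word_perm_fixpoint_free_iff[of "block_word s"] free by auto
  next
    fix w assume w: "mset w = block_letters" "hits 0 L1 w" "hits 1 (L1 + L2) w"
    show "block_word (word_perm w) = w" "word_perm w permutes {1..total_len}"
      "dec_on_classes {1..total_len} (block_of \<circ> word_perm w) (word_perm w)"
      using block_word_word_perm word_perm_permutes dec_on_classes_word_perm w(1) by auto
    show "\<And>i. i \<in> {1..L1+L2} \<Longrightarrow> word_perm w i = i \<Longrightarrow> False"
      using word_perm_fixpoint_free_iff[OF w(1)] w by auto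
  qed
  ultimately show ?thesis by (simp add: bij_betw_same_card)
qed

end

lemma Nblk_eq_Nword: "Nblk L1 L2 L3 L4 = Nword (block_letters L1 L2 L3 L4)"
  unfolding Nblk_eq_card_dec_on_classes card_dec_on_classes_inv by (rule card_dec_on_classes_eq_Nword)

lemma block_letters_remove:
  "0 < L1 \<Longrightarrow> block_letters L1 L2 L3 L4 - {#0#} = block_letters (L1 - 1) L2 L3 L4"
  "0 < L2 \<Longrightarrow> block_letters L1 L2 L3 L4 - {#1#} = block_letters L1 (L2 - 1) L3 L4"
  "0 < L3 \<Longrightarrow> block_letters L1 L2 L3 L4 - {#2#} = block_letters L1 L2 (L3 - 1) L4"
  "0 < L4 \<Longrightarrow> block_letters L1 L2 L3 L4 - {#3#} = block_letters L1 L2 L3 (L4 - 1)"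
  by (cases L1; cases L2; cases L3; cases L4; simp add: block_letters_def)+

lemma Nblk_rec:
  assumes "1 \<le> L3 + L4"
  shows "Nblk L1 L2 L3 L4 =
    (if 0 < L1 then Nblk (L1 - 1) L2 L3 L4 else 0) + (if 0 < L2 then Nblk L1 (L2 - 1) L3 L4 else 0) +
    (if 0 < L3 then Nblk L1 L2 (L3 - 1) L4 else 0) + (if 0 < L4 then Nblk L1 L2 L3 (L4 - 1) else 0)"
proof -
  let ?B = "block_letters L1 L2 L3 L4"
  define g where "g x = (if x \<in># ?B then Nword (?B - {#x#}) else 0)" for x
  have "count ?B 0 + count ?B 1 < size ?B"
    using assms by (simp add: count_block_letters size_block_letters block_len_def total_len_def) linarith
  then have "Nblk L1 L2 L3 L4 = (\<Sum>x\<in>set_mset ?B. g x)"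
    by (simp add: Nblk_eq_Nword Nword_rec g_def)
  also have "\<dots> = (\<Sum>x\<in>{0, 1, 2, 3}. g x)"
  proof (rule sum.mono_neutral_left)
    show "set_mset ?B \<subseteq> {0, 1, 2, 3}" by (auto simp: block_letters_def)
  qed (auto simp: g_def)
  also have "\<dots> = g 0 + g 1 + g 2 + g 3" by simp
  finally have "Nblk L1 L2 L3 L4 = g 0 + g 1 + g 2 + g 3" .
  moreover have "0 \<in># ?B \<longleftrightarrow> 0 < L1" "1 \<in># ?B \<longleftrightarrow> 0 < L2" "2 \<in># ?B \<longleftrightarrow> 0 < L3" "3 \<in># ?B \<longleftrightarrow> 0 < L4"
    by (simp_all add: block_letters_def)
  ultimately show ?thesis
    unfolding g_def Nblk_eq_Nword using block_letters_remove by presburger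
qed

text \<open>Extending \<open>Nblk\<close> by zero to negative block lengths absorbs the summation range of \<open>G\<close>.\<close>

definition Nblk_int :: "int \<Rightarrow> int \<Rightarrow> int \<Rightarrow> int \<Rightarrow> nat" where
  "Nblk_int L1 L2 L3 L4 =
    (if 0 \<le> L1 \<and> 0 \<le> L2 \<and> 0 \<le> L3 \<and> 0 \<le> L4 then Nblk (nat L1) (nat L2) (nat L3) (nat L4) else 0)"

lemma Nblk_int_rec:
  assumes "0 \<le> L3" "0 \<le> L4" "1 \<le> L3 + L4"
  shows "Nblk_int L1 L2 L3 L4 = Nblk_int (L1 - 1) L2 L3 L4 + Nblk_int L1 (L2 - 1) L3 L4
    + Nblk_int L1 L2 (L3 - 1) L4 + Nblk_int L1 L2 L3 (L4 - 1)"
proof (cases "0 \<le> L1 \<and> 0 \<le> L2")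
  case True
  have "1 \<le> nat L3 + nat L4" using assms by linarith
  then show ?thesis
    using True assms Nblk_rec[of "nat L3" "nat L4" "nat L1" "nat L2"]
    by (simp add: Nblk_int_def nat_diff_distrib)
qed (auto simp: Nblk_int_def)

lemma G_eq_sum:
  assumes "lo \<le> 0" "s \<le> hi"
  shows "G a1 a2 s = (\<Sum>m=lo..hi. Nblk_int (a1 - m) (a2 - (s - m)) m (s - m))"
  unfolding G_def
proof (rule sum.mono_neutral_cong_left)
  show "{m. 0 \<le> a1 - m \<and> 0 \<le> a2 - (s - m) \<and> 0 \<le> m \<and> 0 \<le> s - m} \<subseteq> {lo..hi}"
    using assms by auto
qed (auto simp: Nblk_int_def)

lemma sum_int_shift: "(\<Sum>m=a..b. f (m - 1)) = (\<Sum>m=a-1..b-1. f m)" for f :: "int \<Rightarrow> nat"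
  by (rule sum.reindex_bij_witness[of _ "\<lambda>m. m + 1" "\<lambda>m. m - 1"]) auto

lemma G_rec:
  assumes "1 \<le> s"
  shows "G a1 a2 s = G (a1 - 1) a2 s + G (a1 - 1) a2 (s - 1) + G a1 (a2 - 1) s + G a1 (a2 - 1) (s - 1)"
proof -
  define T where "T a1 a2 s m = Nblk_int (a1 - m) (a2 - (s - m)) m (s - m)" for a1 a2 s m :: int
  have rec: "T a1 a2 s m = T (a1 - 1) a2 s m + T (a1 - 1) a2 (s - 1) (m - 1) + T a1 (a2 - 1) s m
      + T a1 (a2 - 1) (s - 1) m" if "m \<in> {0..s}" for m
    using that Nblk_int_rec[of m "s - m" "a1 - m" "a2 - (s - m)"] assms
    by (simp add: T_def algebra_simps)
  have "G a1 a2 s = (\<Sum>m=0..s. T a1 a2 s m)"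
    using G_eq_sum[of 0 s] assms by (simp add: T_def)
  also have "\<dots> = (\<Sum>m=0..s. T (a1 - 1) a2 s m) + (\<Sum>m=0..s. T (a1 - 1) a2 (s - 1) (m - 1))
      + (\<Sum>m=0..s. T a1 (a2 - 1) s m) + (\<Sum>m=0..s. T a1 (a2 - 1) (s - 1) m)"
    using rec by (simp add: sum.distrib)
  also have "\<dots> = G (a1 - 1) a2 s + G (a1 - 1) a2 (s - 1) + G a1 (a2 - 1) s + G a1 (a2 - 1) (s - 1)"
  proof -
    have "G (a1 - 1) a2 s = (\<Sum>m=0..s. T (a1 - 1) a2 s m)"
      "G a1 (a2 - 1) s = (\<Sum>m=0..s. T a1 (a2 - 1) s m)"
      "G a1 (a2 - 1) (s - 1) = (\<Sum>m=0..s. T a1 (a2 - 1) (s - 1) m)"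
      "G (a1 - 1) a2 (s - 1) = (\<Sum>m=0 - 1..s - 1. T (a1 - 1) a2 (s - 1) m)"
      unfolding T_def by (rule G_eq_sum; simp)+
    then show ?thesis unfolding sum_int_shift by simp
  qed
  finally show ?thesis .
qed

theorem mainTheorem16:
  fixes a1 a2 s :: int
  assumes "a1 \<ge> 1" and "a2 \<ge> 0" and "s \<ge> 1"
  shows "G a1 a2 s = G (a1 - 1) a2 s + G (a1 - 1) a2 (s - 1) + G a1 (a2 - 1) s + G a1 (a2 - 1) (s - 1)"
  using assms(3) by (rule G_rec)

end
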